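(* Let $R$ be a commutative ring which is free as an abelian group with $\mathbb{Z}$-basis $V$, let $n\ge2$, $p$ a prime and $r\ge1$. Then $$\Gamma(SL_n(R),p^r)/\Gamma(SL_n(R),p^{r+1})\cong\bigoplus_{n^2-1}\mathbb{F}_p[V].$$
   Context: $\Gamma(SL_n(R),p^m)=\ker\big(SL_n(R)\to SL_n(R\otimes_{\mathbb{Z}}\mathbb{Z}/p^m)\big)$. $\mathbb{F}_p[V]$ denotes the $\mathbb{F}_p$-vector space with basis $V$ (equivalently the additive group of $R/pR$); the right-hand side is a direct sum of $n^2-1$ copies. *)

theory Defs
  imports "HOL-Algebra.Product_Groups" "Jordan_Normal_Form.Determinant"
begin

definition is_Z_basis :: "'a::comm_ring_1 set \<Rightarrow> bool" where
  "is_Z_basis V \<longleftrightarrow> (\<forall>x::'a. \<exists>!c::'a \<Rightarrow> int.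
      (\<forall>v. v \<notin> V \<longrightarrow> c v = 0) \<and> finite {v. c v \<noteq> 0} \<and>
      x = (\<Sum>v\<in>{v. c v \<noteq> 0}. of_int (c v) * v))"

definition cong_one_mod :: "nat \<Rightarrow> nat \<Rightarrow> 'a::comm_ring_1 mat \<Rightarrow> bool" where
  "cong_one_mod n q A \<longleftrightarrow> (\<forall>i<n. \<forall>j<n. \<exists>y::'a. A $$ (i,j) - (1\<^sub>m n) $$ (i,j) = of_nat q * y)"

definition Gamma_SL :: "nat \<Rightarrow> nat \<Rightarrow> ('a::comm_ring_1 mat) monoid" where
  "Gamma_SL n q = \<lparr>carrier = {A \<in> carrier_mat n n. det A = 1 \<and> cong_one_mod n q A},
                   monoid.mult = (\<lambda>A B. A * B), monoid.one = 1\<^sub>m n\<rparr>"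

definition Fp_free :: "nat \<Rightarrow> 'b set \<Rightarrow> ('b \<Rightarrow> int) monoid" where
  "Fp_free p V = sum_group V (\<lambda>_. integer_mod_group p)"

end

theory Submission
  imports Defs
begin

text \<open>Write \<open>q = p\<^sup>r\<close> and \<open>A = 1 + q X\<close> for \<open>A \<in> \<Gamma>(q)\<close>; since \<open>R\<close> is torsion-free, \<open>X\<close> is
  determined by \<open>A\<close>. From \<open>(1 + q X)(1 + q Y) = 1 + q (X + Y + q X Y)\<close> and \<open>p | q\<close>, the map
  \<open>A \<mapsto> X mod p\<close> is a homomorphism into matrices over \<open>R/pR = F\<^sub>p[V]\<close> with kernel \<open>\<Gamma>(pq)\<close>.
  Its image consists of trace-zero matrices, because \<open>det (1 + q X) \<equiv> 1 + q tr X\<close> modulo \<open>q\<^sup>2\<close>;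
  so nothing is lost by forgetting the last diagonal entry. Transvections \<open>1 + q x E\<^sub>i\<^sub>j\<close> and
  their conjugates reach every one of the remaining \<open>n\<^sup>2 - 1\<close> coordinates, which gives
  surjectivity.\<close>

definition Z_coeffs :: "'a set \<Rightarrow> ('a \<Rightarrow> int) \<Rightarrow> bool" where
  "Z_coeffs V c \<longleftrightarrow> (\<forall>v. v \<notin> V \<longrightarrow> c v = 0) \<and> finite {v. c v \<noteq> 0}"

definition Z_comb :: "('a::comm_ring_1 \<Rightarrow> int) \<Rightarrow> 'a" where
  "Z_comb c = (\<Sum>v\<in>{v. c v \<noteq> 0}. of_int (c v) * v)"

lemma Z_comb_eq_sum:
  assumes "finite S" "{v. c v \<noteq> 0} \<subseteq> S"
  shows "Z_comb c = (\<Sum>v\<in>S. of_int (c v) * v)"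
  unfolding Z_comb_def by (rule sum.mono_neutral_left) (use assms in auto)

lemma Z_coeffs_add: "Z_coeffs V c \<Longrightarrow> Z_coeffs V d \<Longrightarrow> Z_coeffs V (\<lambda>v. c v + d v)"
  unfolding Z_coeffs_def by (auto intro: finite_subset[of _ "{v. c v \<noteq> 0} \<union> {v. d v \<noteq> 0}"])

lemma Z_coeffs_mult: "Z_coeffs V c \<Longrightarrow> Z_coeffs V (\<lambda>v. k * c v)"
  unfolding Z_coeffs_def by (auto intro: finite_subset[of _ "{v. c v \<noteq> 0}"])

lemma Z_comb_add:
  assumes "Z_coeffs V c" "Z_coeffs V d"
  shows "Z_comb (\<lambda>v. c v + d v) = Z_comb c + Z_comb d"
proof -
  let ?S = "{v. c v \<noteq> 0} \<union> {v. d v \<noteq> 0}"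
  have S: "finite ?S" using assms unfolding Z_coeffs_def by auto
  have "Z_comb (\<lambda>v. c v + d v) = (\<Sum>v\<in>?S. of_int (c v) * v) + (\<Sum>v\<in>?S. of_int (d v) * v)"
    by (subst Z_comb_eq_sum[OF S]) (auto simp: distrib_right sum.distrib)
  also have "\<dots> = Z_comb c + Z_comb d"
    using Z_comb_eq_sum[OF S, of c] Z_comb_eq_sum[OF S, of d] by auto
  finally show ?thesis .
qed

lemma Z_comb_mult:
  assumes "Z_coeffs V c"
  shows "Z_comb (\<lambda>v. k * c v) = of_int k * Z_comb c"
proof -
  have S: "finite {v. c v \<noteq> 0}" using assms unfolding Z_coeffs_def by auto
  show ?thesis
    by (subst Z_comb_eq_sum[OF S]) (auto simp: Z_comb_def sum_distrib_left mult.assoc)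
qed

locale Z_basis =
  fixes V :: "'a::comm_ring_1 set"
  assumes basis: "is_Z_basis V"
begin

definition coord :: "'a \<Rightarrow> 'a \<Rightarrow> int" where
  "coord x = (THE c. Z_coeffs V c \<and> x = Z_comb c)"

lemma ex1_coeffs: "\<exists>!c. Z_coeffs V c \<and> x = Z_comb c"
  using basis unfolding is_Z_basis_def Z_coeffs_def Z_comb_def by blast

lemma coord: "Z_coeffs V (coord x)" "Z_comb (coord x) = x"
  using theI'[OF ex1_coeffs[of x]] unfolding coord_def by auto

lemma coord_eqI: "Z_coeffs V c \<Longrightarrow> Z_comb c = x \<Longrightarrow> coord x = c"
  using ex1_coeffs[of x] coord[of x] by metis

lemma coord_add: "coord (x + y) = (\<lambda>v. coord x v + coord y v)"
  by (rule coord_eqI) (auto simp: Z_coeffs_add coord Z_comb_add[of V])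

lemma coord_of_int_mult: "coord (of_int k * x) = (\<lambda>v. k * coord x v)"
  by (rule coord_eqI) (auto simp: Z_coeffs_mult coord Z_comb_mult[of V])

lemma coord_of_nat_mult: "coord (of_nat m * x) = (\<lambda>v. int m * coord x v)"
  using coord_of_int_mult[of "int m" x] by simp

lemma coord_zero: "coord 0 = (\<lambda>v. 0)"
  using coord_of_int_mult[of 0 0] by simp

lemma coord_eq_0_iff: "coord x = (\<lambda>v. 0) \<longleftrightarrow> x = 0"
  using coord(2)[of x] coord_zero by (auto simp: Z_comb_def)

lemma coord_outside: "v \<notin> V \<Longrightarrow> coord x v = 0"
  using coord(1)[of x] unfolding Z_coeffs_def by auto

lemma finite_coord_support: "finite {v. coord x v \<noteq> 0}"
  using coord(1)[of x] unfolding Z_coeffs_def by auto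

lemma torsion_free:
  assumes "m > 0" "of_nat m * y = (0::'a)"
  shows "y = 0"
  using assms coord_of_nat_mult[of m y] coord_eq_0_iff[of y] coord_zero by (auto simp: fun_eq_iff)

lemma of_nat_dvd_iff_coord:
  assumes "m > 0"
  shows "of_nat m dvd x \<longleftrightarrow> (\<forall>v. int m dvd coord x v)"
proof
  assume "of_nat m dvd x"
  then show "\<forall>v. int m dvd coord x v" by (auto simp: coord_of_nat_mult)
next
  assume dvd: "\<forall>v. int m dvd coord x v"
  define c where "c v = coord x v div int m" for v
  have "Z_coeffs V c"
    using coord(1)[of x] unfolding Z_coeffs_def c_def
    by (auto intro: finite_subset[of _ "{v. coord x v \<noteq> 0}"])
  moreover have "(\<lambda>v. int m * c v) = coord x" using dvd unfolding c_def by auto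
  ultimately have "x = of_int (int m) * Z_comb c" using Z_comb_mult coord(2)[of x] by metis
  then show "of_nat m dvd x" by simp
qed

text \<open>Division by \<open>m\<close>; its value is unspecified unless \<open>of_nat m\<close> divides \<open>x\<close>.\<close>
definition exact_div :: "nat \<Rightarrow> 'a \<Rightarrow> 'a" where
  "exact_div m x = (THE y. x = of_nat m * y)"

lemma exact_div_of_nat_mult:
  assumes "m > 0"
  shows "exact_div m (of_nat m * y) = y"
  unfolding exact_div_def
proof (rule the_equality)
  fix y' assume "of_nat m * y = of_nat m * y'"
  then have "of_nat m * (y' - y) = (0::'a)" by (simp add: algebra_simps)
  then have "y' - y = 0" by (rule torsion_free[OF assms])
  then show "y' = y" by simp
qed simp

text \<open>Reduction modulo \<open>p\<close>, identifying \<open>R/pR\<close> with \<open>F\<^sub>p[V]\<close> through the basis coordinates.\<close>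
definition reduce :: "nat \<Rightarrow> 'a \<Rightarrow> 'a \<Rightarrow> int" where
  "reduce p x = (\<lambda>v\<in>V. coord x v mod int p)"

lemma carrier_Fp_free:
  "p > 0 \<Longrightarrow> carrier (Fp_free p V) = {w \<in> V \<rightarrow>\<^sub>E {0..<int p}. finite {v \<in> V. w v \<noteq> 0}}"
  unfolding Fp_free_def by (subst carrier_sum_group) (auto simp: carrier_integer_mod_group)

lemma reduce_carrier: "p > 0 \<Longrightarrow> reduce p x \<in> carrier (Fp_free p V)"
  unfolding carrier_Fp_free reduce_def
  by (auto intro: finite_subset[OF _ finite_coord_support[of x]])

lemma reduce_add: "reduce p (x + y) = reduce p x \<otimes>\<^bsub>Fp_free p V\<^esub> reduce p y"
  by (auto simp: Fp_free_def reduce_def coord_add mod_add_eq)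

lemma reduce_eq_one_iff:
  assumes "p > 0"
  shows "reduce p x = \<one>\<^bsub>Fp_free p V\<^esub> \<longleftrightarrow> of_nat p dvd x"
proof -
  have "reduce p x = \<one>\<^bsub>Fp_free p V\<^esub> \<longleftrightarrow> (\<forall>v\<in>V. int p dvd coord x v)"
    by (auto simp: Fp_free_def reduce_def fun_eq_iff dvd_eq_mod_eq_0 split: if_splits)
  also have "\<dots> \<longleftrightarrow> of_nat p dvd x"
    using of_nat_dvd_iff_coord[OF assms] coord_outside by fastforce
  finally show ?thesis .
qed

lemma reduce_surj:
  assumes "p > 0" "w \<in> carrier (Fp_free p V)"
  obtains x where "reduce p x = w"
proof
  define c where "c v = (if v \<in> V then w v else 0)" for v
  have "Z_coeffs V c"
    using assms unfolding carrier_Fp_free[OF assms(1)] Z_coeffs_def c_def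
    by (auto intro: finite_subset[of _ "{v \<in> V. w v \<noteq> 0}"])
  then have "coord (Z_comb c) = c" by (rule coord_eqI) simp
  then show "reduce p (Z_comb c) = w"
    using assms unfolding carrier_Fp_free[OF assms(1)] reduce_def c_def
    by (auto simp: PiE_iff extensional_def)
qed

end

definition single_sum :: "'i set \<Rightarrow> ('i \<Rightarrow> ('b, 'c) monoid_scheme) \<Rightarrow> 'i \<Rightarrow> 'b \<Rightarrow> 'i \<Rightarrow> 'b" where
  "single_sum I G i x = (\<lambda>j\<in>I. if j = i then x else \<one>\<^bsub>G j\<^esub>)"

lemma sum_group_generated_by_singles:
  assumes groups: "\<And>i. i \<in> I \<Longrightarrow> group (G i)" and H: "subgroup H (sum_group I G)"
    and singles: "\<And>i x. i \<in> I \<Longrightarrow> x \<in> carrier (G i) \<Longrightarrow> single_sum I G i x \<in> H"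
  shows "H = carrier (sum_group I G)"
proof
  show "H \<subseteq> carrier (sum_group I G)" by (rule subgroup.subset[OF H])
next
  show "carrier (sum_group I G) \<subseteq> H"
  proof
    fix g assume g: "g \<in> carrier (sum_group I G)"
    define part where "part K = (\<lambda>i\<in>I. if i \<in> K then g i else \<one>\<^bsub>G i\<^esub>)" for K
    have g_in: "g i \<in> carrier (G i)" if "i \<in> I" for i
      using g that by (auto simp: carrier_sum_group groups PiE_iff)
    have "part K \<in> H" if "finite K" for K
      using that
    proof (induction K rule: finite_induct)
      case empty
      have "part {} = \<one>\<^bsub>sum_group I G\<^esub>" unfolding part_def one_sum_group by (rule restrict_ext) simp
      then show ?case using subgroup.one_closed[OF H] by (simp only:)
    next
      case (insert k K)
      show ?case
      proof (cases "k \<in> I")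
        case True
        have "part (insert k K) = part K \<otimes>\<^bsub>sum_group I G\<^esub> single_sum I G k (g k)"
          using insert.hyps(2) g_in
          by (auto simp: part_def single_sum_def groups group.is_monoid intro!: restrict_ext)
        then show ?thesis
          using subgroup.m_closed[OF H insert.IH singles[OF True g_in[OF True]]] by (simp only:)
      next
        case False
        then have "part (insert k K) = part K" by (auto simp: part_def intro!: restrict_ext)
        then show ?thesis using insert.IH by simp
      qed
    qed
    moreover have "part {i \<in> I. g i \<noteq> \<one>\<^bsub>G i\<^esub>} = g"
      using g by (auto simp: part_def carrier_sum_group groups PiE_iff extensional_def)
    moreover have "finite {i \<in> I. g i \<noteq> \<one>\<^bsub>G i\<^esub>}"
      using g by (simp add: carrier_sum_group groups)
    ultimately show "g \<in> H" by metis
  qed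
qed

lemma sum_group_reindex_bij:
  assumes h: "bij_betw h I J" and groups: "\<And>j. j \<in> J \<Longrightarrow> group (G j)"
  shows "bij_betw (\<lambda>x. \<lambda>i\<in>I. x (h i)) (carrier (sum_group J G)) (carrier (sum_group I (\<lambda>i. G (h i))))"
proof -
  let ?S = "sum_group J G" and ?T = "sum_group I (\<lambda>i. G (h i))"
  let ?r = "\<lambda>x. \<lambda>i\<in>I. x (h i)"
  have hI: "h i \<in> J" if "i \<in> I" for i using h that by (auto simp: bij_betw_def)
  have groupsT: "group (G (h i))" if "i \<in> I" for i using groups hI that by blast
  have fin: "finite {i \<in> I. x (h i) \<noteq> \<one>\<^bsub>G (h i)\<^esub>} \<longleftrightarrow> finite {j \<in> J. x j \<noteq> \<one>\<^bsub>G j\<^esub>}" for x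
  proof -
    have "h ` {i \<in> I. x (h i) \<noteq> \<one>\<^bsub>G (h i)\<^esub>} = {j \<in> J. x j \<noteq> \<one>\<^bsub>G j\<^esub>}"
      using h by (auto simp: bij_betw_def)
    then show ?thesis
      using h finite_image_iff[of h] inj_on_subset by (metis (no_types, lifting) bij_betw_def mem_Collect_eq subsetI)
  qed
  have "?r ` carrier ?S \<subseteq> carrier ?T"
  proof
    fix y assume "y \<in> ?r ` carrier ?S"
    then obtain x where x: "x \<in> carrier ?S" and y: "y = ?r x" by blast
    have "finite {i \<in> I. x (h i) \<noteq> \<one>\<^bsub>G (h i)\<^esub>}"
      using x fin by (simp add: carrier_sum_group groups)
    then show "y \<in> carrier ?T"
      using x hI by (auto simp: y carrier_sum_group groups groupsT PiE_iff elim: rev_finite_subset)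
  qed
  moreover have "carrier ?T \<subseteq> ?r ` carrier ?S"
  proof
    fix y assume y: "y \<in> carrier ?T"
    define x where "x = (\<lambda>j\<in>J. y (inv_into I h j))"
    have x_h: "x (h i) = y i" if "i \<in> I" for i
      using h that by (auto simp: x_def bij_betw_def)
    have "x j \<in> carrier (G j)" if "j \<in> J" for j
      using y that h bij_betw_inv_into_right[OF h] inv_into_into[of j h I]
      by (auto simp: x_def carrier_sum_group groupsT PiE_iff bij_betw_def)
    moreover have "finite {i \<in> I. x (h i) \<noteq> \<one>\<^bsub>G (h i)\<^esub>}"
      using y x_h by (auto simp: carrier_sum_group groupsT elim: rev_finite_subset)
    then have "finite {j \<in> J. x j \<noteq> \<one>\<^bsub>G j\<^esub>}" using fin by blast
    ultimately have "x \<in> carrier ?S" by (auto simp: x_def carrier_sum_group groups)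
    moreover have "?r x = y"
      using y x_h by (auto simp: carrier_sum_group groupsT PiE_iff extensional_def)
    ultimately show "y \<in> ?r ` carrier ?S" by blast
  qed
  moreover have "inj_on ?r (carrier ?S)"
  proof (rule inj_onI)
    fix x x' assume x: "x \<in> carrier ?S" and x': "x' \<in> carrier ?S" and eq: "?r x = ?r x'"
    have "x j = x' j" if j: "j \<in> J" for j
    proof -
      obtain i where "i \<in> I" "j = h i" using h j by (auto simp: bij_betw_def)
      then show ?thesis using fun_cong[OF eq, of i] by simp
    qed
    then show "x = x'"
      using x x' by (auto simp: carrier_sum_group groups PiE_iff intro: extensionalityI)
  qed
  ultimately show ?thesis by (auto simp: bij_betw_def)
qed

lemma sum_group_reindex_iso:
  assumes h: "bij_betw h I J" and groups: "\<And>j. j \<in> J \<Longrightarrow> group (G j)"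
  shows "sum_group J G \<cong> sum_group I (\<lambda>i. G (h i))"
proof (rule is_isoI, rule isoI)
  have "h i \<in> J" if "i \<in> I" for i using h that by (auto simp: bij_betw_def)
  then show "(\<lambda>x. \<lambda>i\<in>I. x (h i)) \<in> hom (sum_group J G) (sum_group I (\<lambda>i. G (h i)))"
    using bij_betwE[OF sum_group_reindex_bij[where G = G, OF h groups]] by (intro homI) (auto intro!: restrict_ext)
qed (rule sum_group_reindex_bij[where G = G, OF h groups])

definition dev_id :: "'a::comm_ring_1 mat \<Rightarrow> nat \<Rightarrow> nat \<Rightarrow> 'a" where
  "dev_id A i j = A $$ (i,j) - (if i = j then 1 else 0)"

lemma cong_one_mod_iff_dvd_dev_id:
  "cong_one_mod n q A \<longleftrightarrow> (\<forall>i<n. \<forall>j<n. of_nat q dvd dev_id A i j)"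
  unfolding cong_one_mod_def dev_id_def dvd_def by auto

lemma carrier_Gamma_SL:
  "carrier (Gamma_SL n q) = {A \<in> carrier_mat n n. det A = 1 \<and> (\<forall>i<n. \<forall>j<n. of_nat q dvd dev_id A i j)}"
  by (simp add: Gamma_SL_def cong_one_mod_iff_dvd_dev_id)

lemma mult_Gamma_SL [simp]: "A \<otimes>\<^bsub>Gamma_SL n q\<^esub> B = A * B"
  by (simp add: Gamma_SL_def)

lemma one_Gamma_SL [simp]: "\<one>\<^bsub>Gamma_SL n q\<^esub> = 1\<^sub>m n"
  by (simp add: Gamma_SL_def)

lemma index_mult_dev_id:
  assumes "A \<in> carrier_mat n n" "B \<in> carrier_mat n n" "i < n" "j < n"
  shows "(A * B) $$ (i,j) = B $$ (i,j) + (\<Sum>l<n. dev_id A i l * B $$ (l,j))"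
proof -
  have "(A * B) $$ (i,j) = (\<Sum>l<n. (if i = l then B $$ (l,j) else 0) + dev_id A i l * B $$ (l,j))"
    using assms by (auto simp: scalar_prod_def lessThan_atLeast0 dev_id_def algebra_simps intro!: sum.cong)
  then show ?thesis using assms by (simp add: sum.distrib)
qed

lemma dev_id_mult:
  assumes "A \<in> carrier_mat n n" "B \<in> carrier_mat n n" "i < n" "j < n"
  shows "dev_id (A * B) i j = dev_id A i j + dev_id B i j + (\<Sum>l<n. dev_id A i l * dev_id B l j)"
proof -
  have "(\<Sum>l<n. dev_id A i l * B $$ (l,j)) =
        (\<Sum>l<n. (if l = j then dev_id A i l else 0) + dev_id A i l * dev_id B l j)"
    by (auto simp: dev_id_def[of B] algebra_simps intro!: sum.cong)
  also have "\<dots> = dev_id A i j + (\<Sum>l<n. dev_id A i l * dev_id B l j)"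
    using assms(4) by (simp add: sum.distrib)
  finally show ?thesis
    using index_mult_dev_id[OF assms] by (simp add: dev_id_def[of "A * B"] dev_id_def[of B] algebra_simps)
qed

lemma dev_id_mult_of_nat:
  assumes "A \<in> carrier_mat n n" "B \<in> carrier_mat n n" "i < n" "j < n"
    and "\<And>i j. i < n \<Longrightarrow> j < n \<Longrightarrow> dev_id A i j = of_nat q * X i j"
    and "\<And>i j. i < n \<Longrightarrow> j < n \<Longrightarrow> dev_id B i j = of_nat q * Y i j"
  shows "dev_id (A * B) i j = of_nat q * (X i j + Y i j + of_nat q * (\<Sum>l<n. X i l * Y l j))"
  using assms by (simp add: dev_id_mult algebra_simps sum_distrib_left)

lemma mult_mem_Gamma_SL:
  assumes A: "A \<in> carrier (Gamma_SL n q)" and B: "B \<in> carrier (Gamma_SL n q)"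
  shows "A * B \<in> carrier (Gamma_SL n q)"
proof -
  have Am: "A \<in> carrier_mat n n" and Bm: "B \<in> carrier_mat n n" using A B by (auto simp: carrier_Gamma_SL)
  have "det (A * B) = 1" using A B det_mult[OF Am Bm] by (auto simp: carrier_Gamma_SL)
  moreover have "of_nat q dvd dev_id (A * B) i j" if "i < n" "j < n" for i j
    unfolding dev_id_mult[OF Am Bm that] using A B that
    by (auto simp: carrier_Gamma_SL intro!: dvd_add dvd_sum dvd_mult2)
  ultimately show ?thesis using Am Bm by (auto simp: carrier_Gamma_SL)
qed

lemma adj_mat_mem_Gamma_SL:
  assumes A: "A \<in> carrier (Gamma_SL n q)"
  shows "adj_mat A \<in> carrier (Gamma_SL n q)" and "adj_mat A * A = 1\<^sub>m n"
proof -
  have Am: "A \<in> carrier_mat n n" and det_A: "det A = 1" using A by (auto simp: carrier_Gamma_SL)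
  have Ym: "adj_mat A \<in> carrier_mat n n" using adj_mat(1)[OF Am] .
  have "1 \<cdot>\<^sub>m 1\<^sub>m n = (1\<^sub>m n :: 'a mat)" by (rule eq_matI) auto
  then have AY: "A * adj_mat A = 1\<^sub>m n" and YA: "adj_mat A * A = 1\<^sub>m n"
    using adj_mat(2,3)[OF Am] det_A by simp_all
  then show "adj_mat A * A = 1\<^sub>m n" by simp
  have "det (adj_mat A) = 1" using det_mult[OF Am Ym] AY det_A by simp
  moreover have "of_nat q dvd dev_id (adj_mat A) i j" if ij: "i < n" "j < n" for i j
  proof -
    have "dev_id (adj_mat A) i j = - (\<Sum>l<n. dev_id A i l * adj_mat A $$ (l,j))"
      using index_mult_dev_id[OF Am Ym ij] AY ij by (simp add: dev_id_def)
    then show ?thesis using A ij by (auto simp: carrier_Gamma_SL intro!: dvd_sum dvd_mult2)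
  qed
  ultimately show "adj_mat A \<in> carrier (Gamma_SL n q)" using Ym by (auto simp: carrier_Gamma_SL)
qed

lemma group_Gamma_SL: "group (Gamma_SL n q :: 'a::comm_ring_1 mat monoid)"
proof (rule groupI)
  show "\<one>\<^bsub>Gamma_SL n q\<^esub> \<in> carrier (Gamma_SL n q)"
    by (auto simp: carrier_Gamma_SL dev_id_def)
next
  fix A B C :: "'a mat"
  assume "A \<in> carrier (Gamma_SL n q)" "B \<in> carrier (Gamma_SL n q)" "C \<in> carrier (Gamma_SL n q)"
  then show "A \<otimes>\<^bsub>Gamma_SL n q\<^esub> B \<otimes>\<^bsub>Gamma_SL n q\<^esub> C = A \<otimes>\<^bsub>Gamma_SL n q\<^esub> (B \<otimes>\<^bsub>Gamma_SL n q\<^esub> C)"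
    by (auto simp: carrier_Gamma_SL)
next
  fix A :: "'a mat"
  assume "A \<in> carrier (Gamma_SL n q)"
  then show "\<one>\<^bsub>Gamma_SL n q\<^esub> \<otimes>\<^bsub>Gamma_SL n q\<^esub> A = A"
    by (auto simp: carrier_Gamma_SL)
  show "\<exists>Y\<in>carrier (Gamma_SL n q). Y \<otimes>\<^bsub>Gamma_SL n q\<^esub> A = \<one>\<^bsub>Gamma_SL n q\<^esub>"
    using adj_mat_mem_Gamma_SL[OF \<open>A \<in> carrier (Gamma_SL n q)\<close>] by auto
qed (simp add: mult_mem_Gamma_SL)

lemma Gamma_SL_dev_id_factor:
  assumes "A \<in> carrier (Gamma_SL n q)"
  obtains X where "\<And>i j. i < n \<Longrightarrow> j < n \<Longrightarrow> dev_id A i j = of_nat q * X i j"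
proof -
  have "\<forall>i<n. \<forall>j<n. \<exists>y. dev_id A i j = of_nat q * y"
    using assms by (auto simp: carrier_Gamma_SL dvd_def)
  then show ?thesis using that by metis
qed

lemma prod_one_plus_of_nat_mult:
  fixes x :: "'i \<Rightarrow> 'a::comm_ring_1"
  assumes "finite S"
  shows "\<exists>z. (\<Prod>i\<in>S. 1 + of_nat q * x i) = 1 + of_nat q * (\<Sum>i\<in>S. x i) + of_nat q * of_nat q * z"
  using assms
proof (induction S rule: finite_induct)
  case empty
  show ?case by (auto intro: exI[of _ 0])
next
  case (insert a S)
  then obtain z where
    "(\<Prod>i\<in>S. 1 + of_nat q * x i) = 1 + of_nat q * (\<Sum>i\<in>S. x i) + of_nat q * of_nat q * z"
    by blast
  then have "(\<Prod>i\<in>insert a S. 1 + of_nat q * x i) = 1 + of_nat q * (\<Sum>i\<in>insert a S. x i)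
      + of_nat q * of_nat q * (z + x a * (\<Sum>i\<in>S. x i) + of_nat q * x a * z)"
    using insert.hyps by (simp add: algebra_simps)
  then show ?case by blast
qed

text \<open>A non-identity permutation moves at least two indices, so its term in the Leibniz
  formula contains two off-diagonal factors.\<close>
lemma prod_permuted_entries_dvd:
  fixes A :: "'a::comm_ring_1 mat"
  assumes p: "p permutes {0..<n}" "p \<noteq> id"
    and off_diag: "\<And>i j. i < n \<Longrightarrow> j < n \<Longrightarrow> i \<noteq> j \<Longrightarrow> of_nat q dvd A $$ (i,j)"
  shows "of_nat q * of_nat q dvd (\<Prod>k = 0..<n. A $$ (k, p k))"
proof -
  obtain i where i_moved: "p i \<noteq> i" using p(2) by (metis eq_id_iff)
  then have i: "i < n" using p(1) by (meson atLeastLessThan_iff permutes_not_in)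
  define j where "j = p i"
  have j: "j < n" "j \<noteq> i" using i i_moved p(1) by (auto simp: j_def permutes_in_image)
  have j_moved: "p j \<noteq> j" using i_moved p(1) by (metis j_def permutes_inj injD)
  have factor: "of_nat q dvd A $$ (k, p k)" if "k < n" "p k \<noteq> k" for k
    using off_diag that p(1) by (metis atLeastLessThan_iff atLeast0LessThan lessThan_iff permutes_in_image)
  have "(\<Prod>k = 0..<n. A $$ (k, p k)) = A $$ (i, p i) * (A $$ (j, p j) * (\<Prod>k\<in>{0..<n} - {i} - {j}. A $$ (k, p k)))"
    using i j by (simp add: prod.remove[of "{0..<n}" i] prod.remove[of "{0..<n} - {i}" j])
  then show ?thesis
    using factor[OF i i_moved] factor[OF j(1) j_moved] by (simp add: mult_dvd_mono)
qed

lemma det_one_plus_of_nat_mult: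
  fixes A :: "'a::comm_ring_1 mat"
  assumes A: "A \<in> carrier_mat n n"
    and X: "\<And>i j. i < n \<Longrightarrow> j < n \<Longrightarrow> dev_id A i j = of_nat q * X i j"
  shows "\<exists>z. det A = 1 + of_nat q * (\<Sum>i<n. X i i) + of_nat q * of_nat q * z"
proof -
  let ?P = "{p. p permutes {0..<n}}"
  let ?term = "\<lambda>p. signof p * (\<Prod>i = 0..<n. A $$ (i, p i))"
  have det_A: "det A = ?term id + (\<Sum>p\<in>?P - {id}. ?term p)"
    unfolding det_def'[OF A] using sum.remove[of ?P id ?term] by (simp add: finite_permutations)
  have "?term id = (\<Prod>i = 0..<n. 1 + of_nat q * X i i)"
    using X by (auto simp: dev_id_def algebra_simps intro!: prod.cong)
  then obtain z where z: "?term id = 1 + of_nat q * (\<Sum>i<n. X i i) + of_nat q * of_nat q * z"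
    using prod_one_plus_of_nat_mult[of "{0..<n}" q "\<lambda>i. X i i"] by (auto simp: lessThan_atLeast0)
  have "of_nat q * of_nat q dvd ?term p" if "p \<in> ?P - {id}" for p
  proof -
    have "of_nat q dvd A $$ (i,j)" if "i < n" "j < n" "i \<noteq> j" for i j
      using X[OF that(1,2)] that by (simp add: dev_id_def)
    then show ?thesis using prod_permuted_entries_dvd[of p n q A] that by simp
  qed
  then obtain w where "(\<Sum>p\<in>?P - {id}. ?term p) = of_nat q * of_nat q * w"
    by (metis (no_types, lifting) dvd_def dvd_sum)
  then have "det A = 1 + of_nat q * (\<Sum>i<n. X i i) + of_nat q * of_nat q * (z + w)"
    using det_A z by (simp add: algebra_simps)
  then show ?thesis by blast
qed

lemma dev_id_addrow_mat:
  "k \<noteq> l \<Longrightarrow> i < n \<Longrightarrow> j < n \<Longrightarrow> dev_id (addrow_mat n c k l) i j = (if i = k \<and> j = l then c else 0)"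
  by (auto simp: dev_id_def)

lemma addrow_mat_in_Gamma_SL:
  assumes "k \<noteq> l" "k < n" "l < n"
  shows "addrow_mat n (of_nat q * c) k l \<in> carrier (Gamma_SL n q)"
  using assms by (auto simp: carrier_Gamma_SL det_addrow_mat dev_id_addrow_mat)

lemma conjugated_transvection:
  fixes c :: "'a::comm_ring_1"
  assumes a: "a < n" "t < n" "a \<noteq> t"
  defines "M \<equiv> addrow_mat n 1 t a * addrow_mat n (- c) a t * addrow_mat n (-1) t a"
  shows "M \<in> carrier_mat n n" and "det M = 1"
    and "\<And>k l. k < n \<Longrightarrow> l < n \<Longrightarrow>
      dev_id M k l = (if k \<in> {a, t} \<and> l \<in> {a, t} then (if l = a then c else - c) else 0)"
proof -
  have "M = addrow 1 t a (addrow_mat n (- c) a t) * addrow_mat n (-1) t a"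
    unfolding M_def using a by (simp add: addrow_mat[of _ n n])
  also have "\<dots> = addcol (-1) a t (addrow 1 t a (addrow_mat n (- c) a t))"
    by (rule addcol_mat[symmetric]) (use a in auto)
  finally have M: "M = addcol (-1) a t (addrow 1 t a (addrow_mat n (- c) a t))" .
  show "M \<in> carrier_mat n n" unfolding M_def by (meson addrow_mat_carrier mult_carrier_mat)
  show "det M = 1"
    unfolding M_def
    by (simp only: det_mult[OF mult_carrier_mat[OF addrow_mat_carrier addrow_mat_carrier] addrow_mat_carrier]
        det_mult[OF addrow_mat_carrier addrow_mat_carrier] det_addrow_mat[OF a(3)]
        det_addrow_mat[OF not_sym[OF a(3)]]) simp
  show "dev_id M k l = (if k \<in> {a, t} \<and> l \<in> {a, t} then (if l = a then c else - c) else 0)"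
    if "k < n" "l < n" for k l
    using that a
    by (cases "k = a"; cases "k = t"; cases "l = a"; cases "l = t") (simp_all add: M dev_id_def)
qed

text \<open>The trace condition coming from \<open>det = 1\<close> determines the last diagonal entry of
  \<open>(A - 1) / q\<close> modulo \<open>p\<close>, so the remaining \<open>n\<^sup>2 - 1\<close> positions carry the quotient.\<close>
definition index_pairs :: "nat \<Rightarrow> (nat \<times> nat) set" where
  "index_pairs n = {..<n} \<times> {..<n} - {(n - 1, n - 1)}"

lemma finite_index_pairs: "finite (index_pairs n)"
  by (simp add: index_pairs_def)

lemma card_index_pairs: "n \<ge> 1 \<Longrightarrow> card (index_pairs n) = n\<^sup>2 - 1"
  by (simp add: index_pairs_def card_Diff_singleton power2_eq_square)

definition single_entry :: "nat \<Rightarrow> nat \<Rightarrow> 'a::zero \<Rightarrow> nat \<Rightarrow> nat \<Rightarrow> 'a" where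
  "single_entry i j x = (\<lambda>k l. if k = i \<and> l = j then x else 0)"

locale level_quotient = Z_basis V for V :: "'a::comm_ring_1 set" +
  fixes n p r :: nat
  assumes n_pos: "0 < n" and p_pos: "0 < p" and one_le_r: "1 \<le> r"
begin

abbreviation "q \<equiv> p ^ r"
abbreviation "F \<equiv> Fp_free p V"
abbreviation "T \<equiv> sum_group (index_pairs n) (\<lambda>_. F)"
abbreviation "G \<equiv> (Gamma_SL n q :: 'a mat monoid)"

lemma p_dvd_q: "of_nat p dvd (of_nat q :: 'a)"
  using one_le_r by simp

lemma group_F: "group F"
  unfolding Fp_free_def by simp

lemma group_T: "group T"
  using group_F by simp

definition reduce_entries :: "(nat \<Rightarrow> nat \<Rightarrow> 'a) \<Rightarrow> nat \<times> nat \<Rightarrow> 'a \<Rightarrow> int" where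
  "reduce_entries X = restrict (\<lambda>(i, j). reduce p (X i j)) (index_pairs n)"

definition level_map :: "'a mat \<Rightarrow> nat \<times> nat \<Rightarrow> 'a \<Rightarrow> int" where
  "level_map A = reduce_entries (\<lambda>i j. exact_div q (dev_id A i j))"

lemma reduce_entries_carrier: "reduce_entries X \<in> carrier T"
  by (auto simp: reduce_entries_def carrier_sum_group group_F reduce_carrier p_pos
      intro: finite_subset[OF _ finite_index_pairs])

lemma reduce_entries_add:
  "reduce_entries (\<lambda>i j. X i j + Y i j) = reduce_entries X \<otimes>\<^bsub>T\<^esub> reduce_entries Y"
  by (auto simp: reduce_entries_def reduce_add intro!: restrict_ext)

lemma reduce_entries_cong:
  "(\<And>i j. (i, j) \<in> index_pairs n \<Longrightarrow> X i j = Y i j) \<Longrightarrow> reduce_entries X = reduce_entries Y"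
  by (auto simp: reduce_entries_def intro!: restrict_ext)

lemma reduce_entries_eq_one_iff:
  "reduce_entries X = \<one>\<^bsub>T\<^esub> \<longleftrightarrow> (\<forall>(i, j) \<in> index_pairs n. of_nat p dvd X i j)"
proof -
  have "reduce_entries X = \<one>\<^bsub>T\<^esub> \<longleftrightarrow> (\<forall>(i, j) \<in> index_pairs n. reduce p (X i j) = \<one>\<^bsub>F\<^esub>)"
    by (auto simp: reduce_entries_def fun_eq_iff restrict_def split: if_splits)
  then show ?thesis by (simp add: reduce_eq_one_iff[OF p_pos])
qed

lemma reduce_entries_single_entry:
  assumes "(i, j) \<in> index_pairs n"
  shows "reduce_entries (single_entry i j x) = single_sum (index_pairs n) (\<lambda>_. F) (i, j) (reduce p x)"
  using reduce_eq_one_iff[OF p_pos, of 0]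
  by (auto simp: reduce_entries_def single_sum_def single_entry_def intro!: restrict_ext)

lemma level_map_eq:
  assumes "\<And>i j. i < n \<Longrightarrow> j < n \<Longrightarrow> dev_id A i j = of_nat q * X i j"
  shows "level_map A = reduce_entries X"
  unfolding level_map_def
proof (rule reduce_entries_cong)
  fix i j assume "(i, j) \<in> index_pairs n"
  then have "i < n" "j < n" by (auto simp: index_pairs_def)
  then show "exact_div q (dev_id A i j) = X i j"
    using assms exact_div_of_nat_mult[of q] p_pos by simp
qed

lemma level_map_hom: "group_hom G T level_map"
proof -
  have "level_map \<in> hom G T"
  proof (rule homI)
    fix A assume "A \<in> carrier G"
    then obtain X where "\<And>i j. i < n \<Longrightarrow> j < n \<Longrightarrow> dev_id A i j = of_nat q * X i j"
      using Gamma_SL_dev_id_factor by blast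
    then show "level_map A \<in> carrier T" by (simp add: level_map_eq reduce_entries_carrier)
  next
    fix A B assume A: "A \<in> carrier G" and B: "B \<in> carrier G"
    obtain X where X: "\<And>i j. i < n \<Longrightarrow> j < n \<Longrightarrow> dev_id A i j = of_nat q * X i j"
      using Gamma_SL_dev_id_factor[OF A] by blast
    obtain Y where Y: "\<And>i j. i < n \<Longrightarrow> j < n \<Longrightarrow> dev_id B i j = of_nat q * Y i j"
      using Gamma_SL_dev_id_factor[OF B] by blast
    define Z where "Z i j = of_nat q * (\<Sum>l<n. X i l * Y l j)" for i j
    have Am: "A \<in> carrier_mat n n" and Bm: "B \<in> carrier_mat n n"
      using A B by (auto simp: carrier_Gamma_SL)
    have "dev_id (A * B) i j = of_nat q * (X i j + Y i j + Z i j)" if "i < n" "j < n" for i j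
      using dev_id_mult_of_nat[OF Am Bm that X Y] by (simp add: Z_def)
    then have "level_map (A * B) = reduce_entries (\<lambda>i j. X i j + Y i j + Z i j)"
      by (rule level_map_eq)
    also have "\<dots> = (reduce_entries X \<otimes>\<^bsub>T\<^esub> reduce_entries Y) \<otimes>\<^bsub>T\<^esub> reduce_entries Z"
      by (simp only: reduce_entries_add)
    also have "reduce_entries Z = \<one>\<^bsub>T\<^esub>"
      unfolding reduce_entries_eq_one_iff Z_def using p_dvd_q by (auto intro: dvd_mult2)
    also have "(reduce_entries X \<otimes>\<^bsub>T\<^esub> reduce_entries Y) \<otimes>\<^bsub>T\<^esub> \<one>\<^bsub>T\<^esub> = level_map A \<otimes>\<^bsub>T\<^esub> level_map B"
      using monoid.r_one[OF group.is_monoid[OF group_T]] monoid.m_closed[OF group.is_monoid[OF group_T]]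
        reduce_entries_carrier
      by (simp only: level_map_eq[OF X] level_map_eq[OF Y])
    finally show "level_map (A \<otimes>\<^bsub>G\<^esub> B) = level_map A \<otimes>\<^bsub>T\<^esub> level_map B"
      by simp
  qed
  then show ?thesis
    using group_Gamma_SL group_F by (auto simp: group_hom_def group_hom_axioms_def)
qed

lemma dvd_last_diag:
  assumes A: "A \<in> carrier G"
    and X: "\<And>i j. i < n \<Longrightarrow> j < n \<Longrightarrow> dev_id A i j = of_nat q * X i j"
    and dvd: "\<forall>(i, j) \<in> index_pairs n. of_nat p dvd X i j"
  shows "of_nat p dvd X (n - 1) (n - 1)"
proof -
  define t where "t = n - 1"
  have n: "n = Suc t" using n_pos by (simp add: t_def)
  have Am: "A \<in> carrier_mat n n" and det_A: "det A = 1" using A by (auto simp: carrier_Gamma_SL)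
  obtain z where "det A = 1 + of_nat q * (\<Sum>i<n. X i i) + of_nat q * of_nat q * z"
    using det_one_plus_of_nat_mult[OF Am X] by blast
  then have "of_nat q * ((\<Sum>i<n. X i i) + of_nat q * z) = 0"
    using det_A by (simp add: algebra_simps)
  then have trace: "(\<Sum>i<n. X i i) + of_nat q * z = 0"
    by (rule torsion_free[rotated]) (simp add: p_pos)
  have "X t t = ((\<Sum>i<n. X i i) + of_nat q * z) - (\<Sum>i<t. X i i) - of_nat q * z"
    by (simp add: n)
  then have "X t t = - (\<Sum>i<t. X i i) - of_nat q * z"
    by (simp only: trace diff_0)
  moreover have "of_nat p dvd (\<Sum>i<t. X i i)"
    using dvd by (auto simp: index_pairs_def t_def intro!: dvd_sum)
  ultimately show ?thesis
    using p_dvd_q by (simp add: t_def dvd_diff dvd_mult2)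
qed

lemma kernel_level_map: "kernel G T level_map = carrier (Gamma_SL n (p ^ (r + 1)))"
proof
  show "kernel G T level_map \<subseteq> carrier (Gamma_SL n (p ^ (r + 1)))"
  proof
    fix A assume "A \<in> kernel G T level_map"
    then have A: "A \<in> carrier G" and one: "level_map A = \<one>\<^bsub>T\<^esub>" by (auto simp: kernel_def)
    obtain X where X: "\<And>i j. i < n \<Longrightarrow> j < n \<Longrightarrow> dev_id A i j = of_nat q * X i j"
      using Gamma_SL_dev_id_factor[OF A] by blast
    have dvd: "\<forall>(i, j) \<in> index_pairs n. of_nat p dvd X i j"
      using one by (simp only: level_map_eq[OF X] reduce_entries_eq_one_iff)
    have "of_nat p dvd X i j" if "i < n" "j < n" for i j
      using dvd dvd_last_diag[OF A X dvd] that by (cases "(i, j) = (n - 1, n - 1)") (auto simp: index_pairs_def)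
    then have "of_nat (p ^ (r + 1)) dvd dev_id A i j" if "i < n" "j < n" for i j
      using that by (simp add: X mult.commute mult_dvd_mono)
    then show "A \<in> carrier (Gamma_SL n (p ^ (r + 1)))"
      using A by (auto simp: carrier_Gamma_SL)
  qed
next
  show "carrier (Gamma_SL n (p ^ (r + 1))) \<subseteq> kernel G T level_map"
  proof
    fix A :: "'a mat" assume A: "A \<in> carrier (Gamma_SL n (p ^ (r + 1)))"
    obtain Y where "\<And>i j. i < n \<Longrightarrow> j < n \<Longrightarrow> dev_id A i j = of_nat (p ^ (r + 1)) * Y i j"
      using Gamma_SL_dev_id_factor[OF A] by blast
    then have Y: "\<And>i j. i < n \<Longrightarrow> j < n \<Longrightarrow> dev_id A i j = of_nat q * (of_nat p * Y i j)"
      by (simp add: algebra_simps)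
    then have "A \<in> carrier G" using A by (auto simp: carrier_Gamma_SL)
    moreover have "reduce_entries (\<lambda>i j. of_nat p * Y i j) = \<one>\<^bsub>T\<^esub>"
      by (simp only: reduce_entries_eq_one_iff) auto
    then have "level_map A = \<one>\<^bsub>T\<^esub>" by (simp only: level_map_eq[OF Y])
    ultimately show "A \<in> kernel G T level_map" by (simp add: kernel_def)
  qed
qed

lemma level_map_addrow_mat:
  assumes "k \<noteq> l" "k < n" "l < n"
  shows "level_map (addrow_mat n (of_nat q * x) k l) = reduce_entries (single_entry k l x)"
  using assms by (intro level_map_eq) (simp add: dev_id_addrow_mat single_entry_def)

text \<open>\<open>A1\<close> and \<open>A2\<close> cancel the off-diagonal part of \<open>X0\<close>, and \<open>(t, t)\<close> is not a recorded
  position, so only the \<open>(a, a)\<close> entry survives.\<close>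
lemma single_diag_in_image:
  assumes a: "a < n" "a \<noteq> n - 1"
  shows "single_sum (index_pairs n) (\<lambda>_. F) (a, a) (reduce p x) \<in> level_map ` carrier G"
proof -
  define t where "t = n - 1"
  have t: "t < n" "a \<noteq> t" using a n_pos by (auto simp: t_def)
  define A0 :: "'a mat" where
    "A0 = addrow_mat n 1 t a * addrow_mat n (- (of_nat q * x)) a t * addrow_mat n (-1) t a"
  define X0 where "X0 k l = (if k \<in> {a, t} \<and> l \<in> {a, t} then (if l = a then x else - x) else 0)" for k l
  have "dev_id A0 k l = of_nat q * X0 k l" if "k < n" "l < n" for k l
    unfolding A0_def conjugated_transvection(3)[OF a(1) t that] by (simp add: X0_def)
  moreover have "A0 \<in> carrier_mat n n" unfolding A0_def by (rule conjugated_transvection(1)[OF a(1) t])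
  moreover have "det A0 = 1" unfolding A0_def by (rule conjugated_transvection(2)[OF a(1) t])
  ultimately have A0: "A0 \<in> carrier G" and level_A0: "level_map A0 = reduce_entries X0"
    by (auto simp: carrier_Gamma_SL intro: level_map_eq)
  define A1 :: "'a mat" where "A1 = addrow_mat n (of_nat q * x) a t"
  define A2 :: "'a mat" where "A2 = addrow_mat n (of_nat q * - x) t a"
  have A1: "A1 \<in> carrier G" unfolding A1_def by (rule addrow_mat_in_Gamma_SL) (use a t in auto)
  have A2: "A2 \<in> carrier G" unfolding A2_def by (rule addrow_mat_in_Gamma_SL) (use a t in auto)
  have level_A1: "level_map A1 = reduce_entries (single_entry a t x)"
    unfolding A1_def by (rule level_map_addrow_mat) (use a t in auto)
  have level_A2: "level_map A2 = reduce_entries (single_entry t a (- x))"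
    unfolding A2_def by (rule level_map_addrow_mat) (use a t in auto)
  have A01: "A0 * A1 \<in> carrier G" using A0 A1 by (rule mult_mem_Gamma_SL)
  have A012: "A0 * A1 * A2 \<in> carrier G" using A01 A2 by (rule mult_mem_Gamma_SL)
  have "level_map (A0 * A1 * A2) = level_map A0 \<otimes>\<^bsub>T\<^esub> level_map A1 \<otimes>\<^bsub>T\<^esub> level_map A2"
    using group_hom.hom_mult[OF level_map_hom A01 A2] group_hom.hom_mult[OF level_map_hom A0 A1]
    by (simp only: mult_Gamma_SL)
  also have "\<dots> = reduce_entries (\<lambda>i j. X0 i j + single_entry a t x i j + single_entry t a (- x) i j)"
    by (simp only: level_A0 level_A1 level_A2 reduce_entries_add[symmetric])
  also have "\<dots> = reduce_entries (single_entry a a x)"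
    using t by (intro reduce_entries_cong) (auto simp: single_entry_def X0_def index_pairs_def t_def)
  also have "\<dots> = single_sum (index_pairs n) (\<lambda>_. F) (a, a) (reduce p x)"
    using a by (simp add: reduce_entries_single_entry index_pairs_def)
  finally have "level_map (A0 * A1 * A2) = single_sum (index_pairs n) (\<lambda>_. F) (a, a) (reduce p x)" .
  then show ?thesis using A012 by (rule image_eqI[OF sym])
qed

lemma single_in_image:
  assumes ij: "(i, j) \<in> index_pairs n" and w: "w \<in> carrier F"
  shows "single_sum (index_pairs n) (\<lambda>_. F) (i, j) w \<in> level_map ` carrier G"
proof -
  obtain x where x: "reduce p x = w" using reduce_surj[OF p_pos w] .
  show ?thesis
  proof (cases "i = j")
    case True
    then show ?thesis using ij single_diag_in_image[of i x] x by (auto simp: index_pairs_def)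
  next
    case False
    have ij_lt: "i < n" "j < n" using ij by (auto simp: index_pairs_def)
    have "level_map (addrow_mat n (of_nat q * x) i j) = single_sum (index_pairs n) (\<lambda>_. F) (i, j) w"
      using level_map_addrow_mat[OF False ij_lt] reduce_entries_single_entry[OF ij] x by simp
    moreover have "addrow_mat n (of_nat q * x) i j \<in> carrier G"
      by (rule addrow_mat_in_Gamma_SL[OF False ij_lt])
    ultimately show ?thesis by (rule image_eqI[OF sym])
  qed
qed

lemma level_map_image: "level_map ` carrier G = carrier T"
  by (rule sum_group_generated_by_singles)
    (use group_F single_in_image group_hom.img_is_subgroup[OF level_map_hom] in auto)

theorem level_quotient_iso: "G Mod carrier (Gamma_SL n (p ^ (r + 1))) \<cong> T"
  using group_hom.FactGroup_iso[OF level_map_hom level_map_image] by (simp add: kernel_level_map)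

end

theorem lemma3p7:
  fixes V :: "'a::comm_ring_1 set" and n p r :: nat
  assumes "is_Z_basis V" and "n \<ge> 2" and "prime p" and "r \<ge> 1"
  shows "((Gamma_SL n (p ^ r) :: 'a mat monoid) Mod carrier (Gamma_SL n (p ^ (r + 1))))
           \<cong> sum_group {..<n\<^sup>2 - 1} (\<lambda>_. Fp_free p V)"
proof -
  interpret level_quotient V n p r
    by unfold_locales (use assms prime_gt_0_nat in auto)
  obtain h where "bij_betw h {0..<card (index_pairs n)} (index_pairs n)"
    using ex_bij_betw_nat_finite[OF finite_index_pairs] by blast
  then have "bij_betw h {..<n\<^sup>2 - 1} (index_pairs n)"
    using card_index_pairs[of n] assms(2) by (simp add: atLeast0LessThan)
  from sum_group_reindex_iso[OF this group_F]
  have "T \<cong> sum_group {..<n\<^sup>2 - 1} (\<lambda>_. F)" by simp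
  with level_quotient_iso show ?thesis by (rule iso_trans)
qed

end
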